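(* There is a constant $C_0$ such that the following holds. Let $n\ge1$, let $b_1,\dots,b_n\ge2$ be integers and $\varepsilon_1,\dots,\varepsilon_n\in\{+1,-1\}$ with $b_{j+1}\ge b_j^2$ for $1\le j\le n-1$, and let $x=[\langle b_j:\varepsilon_j\rangle_{j=1}^n]$. Define $x_0=1$ and $x_i=G^{\circ(i-1)}(x)$ for $1\le i\le n$. Then \[\frac{|x_n|}{|x_1|}\le C_0\prod_{i=0}^{n-1}|x_i|.\]
   Context: For $x\in\mathbb{R}$, $[x]$ denotes the closest integer to $x$ with the convention $x\in([x]-1/2,[x]+1/2]$ for $x>0$, $x\in[[x]-1/2,[x]+1/2)$ for $x<0$, and $[0]=0$. $G(z)=-1/z-[\operatorname{Re}(-1/z)]$ for $z\ne0$. For integers $b_j\ge2$ and $\varepsilon_j\in\{\pm1\}$, $[\langle b_j:\varepsilon_j\rangle_{j=1}^n]=\cfrac{\varepsilon_1}{b_1+\cfrac{\varepsilon_2}{\ddots+\cfrac{\varepsilon_n}{b_n}}}$. *)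

theory Defs
  imports "HOL-Analysis.Analysis"
begin

text \<open>Nearest integer with the paper's tie-breaking convention:
  for x > 0, x in ([x]-1/2, [x]+1/2]; for x < 0, x in [[x]-1/2, [x]+1/2); [0] = 0.\<close>
definition nint :: "real \<Rightarrow> int" where
  "nint x = (if x > 0 then \<lceil>x - 1/2\<rceil> else if x < 0 then \<lfloor>x + 1/2\<rfloor> else 0)"

text \<open>G(z) = -1/z - [Re(-1/z)] (for z = 0 this gives 0, irrelevant).\<close>
definition G :: "complex \<Rightarrow> complex" where
  "G z = -1/z - of_int (nint (Re (-1/z)))"

fun cfrac :: "(int \<times> int) list \<Rightarrow> real" where
  "cfrac [] = 0"
| "cfrac ((b, e) # rest) = of_int e / (of_int b + cfrac rest)"

end

theory Submission
  imports Defs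
begin

text \<open>Let t_k be the tail [<b_j : e_j>] for j = k..n, so that t_k = e_k / (b_k + t_(k+1)).
  Since b_k \<ge> 4 for k \<ge> 2, every such tail has |t_k| \<le> 1/3; hence -1/t_k = -e_k b_k - e_k t_(k+1)
  has nearest integer -e_k b_k, and G maps \<plusminus>t_k to \<plusminus>t_(k+1). Thus |x_i| = |t_i| \<ge> 1/(b_i + 1) and
  |x_n| = 1/b_n, and the claim reduces to (b_1 + 1) \<Prod>{b_i + 1 | 1 \<le> i < n} \<le> 5 b_n. The growth condition
  b_(j+1) \<ge> b_j^2 gives this by induction on the stronger bound 5 b_m (b_m - 1).\<close>

lemma nint_of_int_add:
  assumes "\<bar>v\<bar> < 1/2"
  shows "nint (of_int m + v) = m"
proof -
  have v: "-1/2 < v" "v < 1/2" using assms by auto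
  consider "of_int m + v > 0" | "of_int m + v < 0" | "of_int m + v = 0" by linarith
  then show ?thesis
  proof cases
    case 1
    then show ?thesis using v by (simp add: nint_def ceiling_eq_iff)
  next
    case 2
    then show ?thesis using v by (simp add: nint_def floor_eq_iff)
  next
    case 3
    then have "m = 0" using assms by linarith
    then show ?thesis using 3 by (simp add: nint_def)
  qed
qed

lemma G_unit_div_of_int_add:
  fixes c k :: int and u :: real
  assumes c: "c \<in> {1, -1}" and u: "\<bar>u\<bar> < 1/2" and nz: "of_int k + u \<noteq> 0"
  shows "G (complex_of_real (of_int c / (of_int k + u))) = complex_of_real (- of_int c * u)"
proof -
  have "-1 / (of_int c / (of_int k + u)) = of_int (- c * k) + (- of_int c * u)"
    using c nz by (auto simp: field_simps)
  then have inv: "-1 / complex_of_real (of_int c / (of_int k + u))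
                  = complex_of_real (of_int (- c * k) + (- of_int c * u))"
    by (metis of_real_divide of_real_minus of_real_1)
  have "\<bar>- of_int c * u\<bar> < 1/2" using c u by auto
  then have "nint (of_int (- c * k) + (- of_int c * u)) = - c * k"
    by (rule nint_of_int_add)
  then show ?thesis unfolding G_def inv by simp
qed

lemma squaring_step_ineq:
  fixes a B :: real
  assumes "a \<ge> 2" "B \<ge> a\<^sup>2"
  shows "a * (a - 1) * (B + 1) \<le> B * (B - 1)"
proof -
  have "a * (a - 1) \<le> B - 2" using assms by (simp add: power2_eq_square algebra_simps)
  moreover have "B + 1 \<ge> 0" using assms zero_le_power2[of a] by linarith
  ultimately have "a * (a - 1) * (B + 1) \<le> (B - 2) * (B + 1)" by (rule mult_right_mono)
  also have "\<dots> \<le> B * (B - 1)" by (simp add: algebra_simps)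
  finally show ?thesis .
qed

lemma prod_succ_le_of_squaring:
  fixes a :: "nat \<Rightarrow> real"
  assumes "1 \<le> m"
    and ge2: "\<And>j. 1 \<le> j \<Longrightarrow> j \<le> m \<Longrightarrow> a j \<ge> 2"
    and sq: "\<And>j. 1 \<le> j \<Longrightarrow> j < m \<Longrightarrow> a (Suc j) \<ge> (a j)\<^sup>2"
  shows "(a 1 + 1) * (\<Prod>j=1..m. a j + 1) \<le> 5 * a m * (a m - 1)"
  using assms
proof (induction m rule: nat_induct_at_least)
  case base
  have "a 1 \<ge> 2" using base.prems by simp
  then have "(a 1 - 2) * (4 * a 1 + 1) \<ge> 0" by simp
  then show ?case by (simp add: power2_eq_square algebra_simps)
next
  case (Suc m)
  have a: "a m \<ge> 2" and B: "a (Suc m) \<ge> (a m)\<^sup>2"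
    using Suc.prems Suc.hyps by auto
  have "(a m)\<^sup>2 \<ge> 2\<^sup>2" using a by (intro power_mono) auto
  then have B4: "a (Suc m) \<ge> 4" using B by simp
  have IH: "(a 1 + 1) * (\<Prod>j=1..m. a j + 1) \<le> 5 * a m * (a m - 1)"
    using Suc by simp
  have "(a 1 + 1) * (\<Prod>j=1..Suc m. a j + 1) = (a 1 + 1) * (\<Prod>j=1..m. a j + 1) * (a (Suc m) + 1)"
    by (simp add: mult.assoc)
  also have "\<dots> \<le> 5 * a m * (a m - 1) * (a (Suc m) + 1)"
    using IH B4 by (intro mult_right_mono) auto
  also have "\<dots> \<le> 5 * a (Suc m) * (a (Suc m) - 1)"
    using squaring_step_ineq[OF a B] by simp
  finally show ?case .
qed

lemma prod_succ_le_last_of_squaring: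
  fixes a :: "nat \<Rightarrow> real"
  assumes "1 \<le> n"
    and ge2: "\<And>j. 1 \<le> j \<Longrightarrow> j \<le> n \<Longrightarrow> a j \<ge> 2"
    and sq: "\<And>j. 1 \<le> j \<Longrightarrow> j < n \<Longrightarrow> a (Suc j) \<ge> (a j)\<^sup>2"
  shows "(a 1 + 1) * (\<Prod>j=1..<n. a j + 1) \<le> 5 * a n"
proof (cases "n = 1")
  case True
  then show ?thesis using ge2[of 1] by simp
next
  case False
  then obtain m where n: "n = Suc m" and m: "1 \<le> m" using assms(1) by (cases n) auto
  have "(a 1 + 1) * (\<Prod>j=1..<n. a j + 1) \<le> 5 * a m * (a m - 1)"
    using prod_succ_le_of_squaring[OF m] ge2 sq unfolding n atLeastLessThanSuc_atLeastAtMost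
    by simp
  also have "a m * (a m - 1) \<le> a n"
    using sq[of m] ge2[of m] m n by (simp add: power2_eq_square algebra_simps)
  then have "5 * a m * (a m - 1) \<le> 5 * a n" by simp
  finally show ?thesis .
qed

locale squaring_cfrac =
  fixes n :: nat and b eps :: "nat \<Rightarrow> int"
  assumes n_ge1: "n \<ge> 1"
    and b_ge2: "\<And>j. 1 \<le> j \<Longrightarrow> j \<le> n \<Longrightarrow> b j \<ge> 2"
    and eps_unit: "\<And>j. 1 \<le> j \<Longrightarrow> j \<le> n \<Longrightarrow> eps j \<in> {1, -1}"
    and b_squaring: "\<And>j. 1 \<le> j \<Longrightarrow> j < n \<Longrightarrow> b (j + 1) \<ge> (b j)\<^sup>2"
begin

definition tail :: "nat \<Rightarrow> real" where
  "tail k = cfrac (map (\<lambda>j. (b j, eps j)) [k..<n+1])"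

lemma tail_eq: "k \<le> n \<Longrightarrow> tail k = of_int (eps k) / (of_int (b k) + tail (Suc k))"
  unfolding tail_def by (subst upt_conv_Cons) auto

lemma tail_beyond: "k > n \<Longrightarrow> tail k = 0"
  unfolding tail_def by simp

lemma abs_eps: "1 \<le> k \<Longrightarrow> k \<le> n \<Longrightarrow> \<bar>real_of_int (eps k)\<bar> = 1"
  using eps_unit by fastforce

lemma b_ge4:
  assumes "2 \<le> k" "k \<le> n"
  shows "b k \<ge> 4"
proof -
  have "(2::int)\<^sup>2 \<le> (b (k - 1))\<^sup>2" using b_ge2[of "k - 1"] assms by (intro power_mono) auto
  also have "\<dots> \<le> b k" using b_squaring[of "k - 1"] assms by simp
  finally show ?thesis by simp
qed

lemma abs_tail_le:
  assumes "2 \<le> k"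
  shows "\<bar>tail k\<bar> \<le> 1/3"
proof (cases "k \<le> Suc n")
  case True
  then show ?thesis
    using assms
  proof (induction k rule: inc_induct)
    case (step k)
    have "real_of_int (b k) \<ge> 4" using b_ge4 step by simp
    then have "\<bar>real_of_int (b k) + tail (Suc k)\<bar> \<ge> 11/3" using step.IH step.prems by linarith
    moreover have "\<bar>tail k\<bar> = 1 / \<bar>real_of_int (b k) + tail (Suc k)\<bar>"
      using tail_eq abs_eps step by (simp add: abs_divide)
    ultimately show ?case by (simp add: divide_le_eq)
  qed (simp add: tail_beyond)
qed (simp add: tail_beyond)

lemma G_iterate_tail:
  assumes "k < n"
  shows "\<exists>\<sigma>\<in>{1, -1::int}. (G ^^ k) (complex_of_real (tail 1)) = complex_of_real (of_int \<sigma> * tail (Suc k))"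
  using assms
proof (induction k)
  case 0
  show ?case by (intro bexI[of _ 1]) auto
next
  case (Suc k)
  then obtain \<sigma> where \<sigma>: "\<sigma> \<in> {1, -1}"
    and IH: "(G ^^ k) (complex_of_real (tail 1)) = complex_of_real (of_int \<sigma> * tail (Suc k))"
    by (meson Suc_lessD)
  have k: "1 \<le> Suc k" "Suc k \<le> n" using Suc.prems by auto
  have u: "\<bar>tail (Suc (Suc k))\<bar> < 1/2" using abs_tail_le[of "Suc (Suc k)"] by simp
  have "real_of_int (b (Suc k)) \<ge> 2" using b_ge2[OF k] by simp
  then have nz: "real_of_int (b (Suc k)) + tail (Suc (Suc k)) \<noteq> 0" using u by linarith
  have c: "\<sigma> * eps (Suc k) \<in> {1, -1}" using \<sigma> eps_unit[OF k] by auto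
  have eq: "of_int \<sigma> * tail (Suc k)
            = of_int (\<sigma> * eps (Suc k)) / (of_int (b (Suc k)) + tail (Suc (Suc k)))"
    using tail_eq[OF k(2)] by simp
  have "(G ^^ Suc k) (complex_of_real (tail 1)) = G (complex_of_real (of_int \<sigma> * tail (Suc k)))"
    by (simp only: funpow.simps comp_apply IH)
  also have "\<dots> = complex_of_real (- of_int (\<sigma> * eps (Suc k)) * tail (Suc (Suc k)))"
    unfolding eq by (rule G_unit_div_of_int_add[OF c u nz])
  finally show ?case using c by (intro bexI[of _ "- (\<sigma> * eps (Suc k))"]) auto
qed

lemma norm_G_iterate_tail:
  assumes "1 \<le> i" "i \<le> n"
  shows "norm ((G ^^ (i - 1)) (complex_of_real (tail 1))) = \<bar>tail i\<bar>"
proof -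
  have "i - 1 < n" and i: "Suc (i - 1) = i" using assms by auto
  then obtain \<sigma> where "\<sigma> \<in> {1, -1::int}"
    and "(G ^^ (i - 1)) (complex_of_real (tail 1)) = complex_of_real (of_int \<sigma> * tail i)"
    using G_iterate_tail[of "i - 1"] unfolding i by blast
  then show ?thesis by (simp only: norm_of_real) (auto simp: abs_mult)
qed

lemma abs_tail_ge:
  assumes "1 \<le> k" "k \<le> n"
  shows "\<bar>tail k\<bar> \<ge> 1 / (real_of_int (b k) + 1)"
proof -
  have "\<bar>tail (Suc k)\<bar> \<le> 1/3" using abs_tail_le assms by simp
  moreover have "real_of_int (b k) \<ge> 2" using b_ge2[OF assms] by simp
  ultimately have "0 < \<bar>real_of_int (b k) + tail (Suc k)\<bar>"
    and "\<bar>real_of_int (b k) + tail (Suc k)\<bar> \<le> real_of_int (b k) + 1" by linarith+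
  then have "1 / (real_of_int (b k) + 1) \<le> 1 / \<bar>real_of_int (b k) + tail (Suc k)\<bar>"
    by (intro divide_left_mono) auto
  also have "\<dots> = \<bar>tail k\<bar>"
    using tail_eq[OF assms(2)] abs_eps[OF assms] by (simp add: abs_divide)
  finally show ?thesis .
qed

lemma abs_tail_last: "\<bar>tail n\<bar> = 1 / real_of_int (b n)"
  using tail_eq[of n] tail_beyond[of "Suc n"] abs_eps[of n] b_ge2[of n] n_ge1
  by (simp add: abs_divide)

lemma abs_tail_ratio_le: "\<bar>tail n\<bar> / \<bar>tail 1\<bar> \<le> 5 * (\<Prod>i=1..<n. \<bar>tail i\<bar>)"
proof -
  define A where "A = (real_of_int (b 1) + 1) * (\<Prod>i=1..<n. real_of_int (b i) + 1)"
  have pos: "real_of_int (b j) + 1 > 0" if "1 \<le> j" "j \<le> n" for j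
    using b_ge2[OF that] by simp
  have "A > 0" unfolding A_def using pos n_ge1 by (intro mult_pos_pos prod_pos) auto
  have t1: "\<bar>tail 1\<bar> \<ge> 1 / (real_of_int (b 1) + 1)"
    using abs_tail_ge[of 1] n_ge1 by simp
  moreover have "0 < 1 / (real_of_int (b 1) + 1)" using pos[of 1] n_ge1 by simp
  ultimately have "\<bar>tail 1\<bar> > 0" by linarith
  have "1 / A = 1 / (real_of_int (b 1) + 1) * (\<Prod>i=1..<n. 1 / (real_of_int (b i) + 1))"
    unfolding A_def prod_dividef by simp
  also have "\<dots> \<le> \<bar>tail 1\<bar> * (\<Prod>i=1..<n. \<bar>tail i\<bar>)"
    using abs_tail_ge pos t1 n_ge1
    by (intro mult_mono prod_mono) (auto intro!: prod_nonneg less_imp_le[OF pos])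
  finally have lower: "1 / A \<le> \<bar>tail 1\<bar> * (\<Prod>i=1..<n. \<bar>tail i\<bar>)" .
  have "A \<le> 5 * real_of_int (b n)"
    unfolding A_def using b_ge2 b_squaring n_ge1 by (intro prod_succ_le_last_of_squaring) auto
  then have "\<bar>tail n\<bar> \<le> 5 * (1 / A)"
    using \<open>A > 0\<close> pos[of n] n_ge1 unfolding abs_tail_last by (simp add: field_simps)
  also have "\<dots> \<le> 5 * (\<Prod>i=1..<n. \<bar>tail i\<bar>) * \<bar>tail 1\<bar>"
    using lower by (simp add: mult_ac)
  finally show ?thesis using \<open>\<bar>tail 1\<bar> > 0\<close> by (simp add: pos_divide_le_eq)
qed

end

theorem lemma6p5:
  shows "\<exists>C0::real. \<forall>(n::nat) (b::nat \<Rightarrow> int) (eps::nat \<Rightarrow> int).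
    n \<ge> 1 \<and>
    (\<forall>j. 1 \<le> j \<and> j \<le> n \<longrightarrow> b j \<ge> 2) \<and>
    (\<forall>j. 1 \<le> j \<and> j \<le> n \<longrightarrow> eps j \<in> {1, -1}) \<and>
    (\<forall>j. 1 \<le> j \<and> j < n \<longrightarrow> b (j + 1) \<ge> (b j)\<^sup>2)
    \<longrightarrow>
    (let x = complex_of_real (cfrac (map (\<lambda>j. (b j, eps j)) [1..<n+1]));
         xs = (\<lambda>i::nat. if i = 0 then 1 else (G ^^ (i - 1)) x)
     in norm (xs n) / norm (xs 1) \<le> C0 * (\<Prod>i<n. norm (xs i)))"
proof (intro exI[of _ 5] allI impI)
  fix n :: nat and b eps :: "nat \<Rightarrow> int"
  assume "n \<ge> 1 \<and> (\<forall>j. 1 \<le> j \<and> j \<le> n \<longrightarrow> b j \<ge> 2) \<and>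
    (\<forall>j. 1 \<le> j \<and> j \<le> n \<longrightarrow> eps j \<in> {1, -1}) \<and>
    (\<forall>j. 1 \<le> j \<and> j < n \<longrightarrow> b (j + 1) \<ge> (b j)\<^sup>2)"
  then interpret squaring_cfrac n b eps by unfold_locales auto
  define xs where "xs i = (if i = 0 then 1 else (G ^^ (i - 1)) (complex_of_real (tail 1)))" for i
  have norm_xs: "norm (xs i) = \<bar>tail i\<bar>" if "1 \<le> i" "i \<le> n" for i
    using norm_G_iterate_tail[OF that] that by (simp add: xs_def)
  have "{..<n} = insert 0 {1..<n}" using n_ge1 by auto
  then have "(\<Prod>i<n. norm (xs i)) = (\<Prod>i=1..<n. norm (xs i))"
    by (simp add: xs_def)
  also have "\<dots> = (\<Prod>i=1..<n. \<bar>tail i\<bar>)"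
    using norm_xs by (intro prod.cong) auto
  finally have "norm (xs n) / norm (xs 1) \<le> 5 * (\<Prod>i<n. norm (xs i))"
    using abs_tail_ratio_le norm_xs[of n] norm_xs[of 1] n_ge1 by simp
  then show "let x = complex_of_real (cfrac (map (\<lambda>j. (b j, eps j)) [1..<n+1]));
                 xs = (\<lambda>i::nat. if i = 0 then 1 else (G ^^ (i - 1)) x)
             in norm (xs n) / norm (xs 1) \<le> 5 * (\<Prod>i<n. norm (xs i))"
    unfolding Let_def tail_def[of 1, symmetric] xs_def .
qed

end
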